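(* Let $(X,*,0)$ be a KU-algebra, let $d: X \to X$ be a self map, let $\beta: X \to [0,1]$ be a fuzzy subset of $X$, and let $\mu_\beta: X \times X \to [0,1]$ be given by $\mu_\beta(x,y) = \min\{\beta(x), \beta(y)\}$. Then $\beta$ is a fuzzy left derivations KU-ideal of $X$ (with respect to $d$) if and only if $\mu_\beta$ is a fuzzy left derivations KU-ideal of the KU-algebra $X \times X$ (with respect to the self map $D(x,y) = (d(x), d(y))$).
   Context: A KU-algebra is a set $X$ with a binary operation $*$ and a constant $0$ such that for all $x,y,z \in X$: (KU1) $(x*y)*[(y*z)*(x*z)] = 0$; (KU2) $x*0 = 0$; (KU3) $0*x = x$; (KU4) $x*y = 0 = y*x$ implies $x = y$. The product $X \times X$ is a KU-algebra with operation $(x,y)*(u,v) = (x*u, y*v)$ and constant $(0,0)$. Given a KU-algebra $Y$ with constant $0_Y$ and a self map $D: Y \to Y$, a fuzzy set $\nu: Y \to [0,1]$ is a fuzzy left derivations KU-ideal of $Y$ if (F1) $\nu(0_Y) \ge \nu(a)$ for all $a \in Y$, and (FL2) $\nu(D(a*c)) \ge \min\{\nu(D(a)*(b*c)), \nu(D(b))\}$ for all $a,b,c \in Y$. The function $\mu_\beta$ is called the strongest fuzzy relation on $X$ associated with $\beta$; the paper writes $d(x,y)$ for the self map of $X\times X$ induced by $d$, i.e. $(d(x),d(y))$. *)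

theory Defs
  imports Complex_Main
begin

definition ku_algebra :: "('a \<Rightarrow> 'a \<Rightarrow> 'a) \<Rightarrow> 'a \<Rightarrow> bool" where
  "ku_algebra m z \<longleftrightarrow>
     (\<forall>x y w. m (m x y) (m (m y w) (m x w)) = z) \<and>
     (\<forall>x. m x z = z) \<and>
     (\<forall>x. m z x = x) \<and>
     (\<forall>x y. m x y = z \<and> m y x = z \<longrightarrow> x = y)"

definition prod_op :: "('a \<Rightarrow> 'a \<Rightarrow> 'a) \<Rightarrow> ('a \<times> 'a) \<Rightarrow> ('a \<times> 'a) \<Rightarrow> ('a \<times> 'a)" where
  "prod_op m p q = (m (fst p) (fst q), m (snd p) (snd q))"

definition fuzzy_set :: "('a \<Rightarrow> real) \<Rightarrow> bool" where
  "fuzzy_set \<nu> \<longleftrightarrow> (\<forall>x. 0 \<le> \<nu> x \<and> \<nu> x \<le> 1)"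

definition fuzzy_left_derivation_KU_ideal ::
  "('a \<Rightarrow> 'a \<Rightarrow> 'a) \<Rightarrow> 'a \<Rightarrow> ('a \<Rightarrow> 'a) \<Rightarrow> ('a \<Rightarrow> real) \<Rightarrow> bool" where
  "fuzzy_left_derivation_KU_ideal m z D \<nu> \<longleftrightarrow>
     fuzzy_set \<nu> \<and>
     (\<forall>a. \<nu> z \<ge> \<nu> a) \<and>
     (\<forall>a b c. \<nu> (D (m a c)) \<ge> min (\<nu> (m (D a) (m b c))) (\<nu> (D b)))"

end

theory Submission
  imports Defs
begin

text \<open>Nothing here depends on the KU-algebra axioms: \<open>\<mu>\<^sub>\<beta>\<close> is a componentwise minimum,
  so each defining inequality on \<open>X \<times> X\<close> is the minimum of two instances on \<open>X\<close>, and conversely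
  every instance on \<open>X\<close> is the diagonal instance on \<open>X \<times> X\<close>, where \<open>min (\<beta> x) (\<beta> x) = \<beta> x\<close>.\<close>

definition strongest_fuzzy_relation :: "('a \<Rightarrow> real) \<Rightarrow> 'a \<times> 'a \<Rightarrow> real" where
  "strongest_fuzzy_relation \<beta> = (\<lambda>(x, y). min (\<beta> x) (\<beta> y))"

lemma strongest_fuzzy_relation_Pair [simp]:
  "strongest_fuzzy_relation \<beta> (x, y) = min (\<beta> x) (\<beta> y)"
  by (simp add: strongest_fuzzy_relation_def)

lemma fuzzy_set_strongest_fuzzy_relation:
  "fuzzy_set \<beta> \<Longrightarrow> fuzzy_set (strongest_fuzzy_relation \<beta>)"
  by (auto simp: fuzzy_set_def min.coboundedI1)

lemma strongest_fuzzy_relation_le_diag_iff: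
  "(\<forall>p. strongest_fuzzy_relation \<beta> p \<le> strongest_fuzzy_relation \<beta> (z, z)) \<longleftrightarrow>
   (\<forall>a. \<beta> a \<le> \<beta> z)"
proof
  assume "\<forall>p. strongest_fuzzy_relation \<beta> p \<le> strongest_fuzzy_relation \<beta> (z, z)"
  then show "\<forall>a. \<beta> a \<le> \<beta> z"
    by (metis min.idem strongest_fuzzy_relation_Pair)
next
  assume "\<forall>a. \<beta> a \<le> \<beta> z"
  then show "\<forall>p. strongest_fuzzy_relation \<beta> p \<le> strongest_fuzzy_relation \<beta> (z, z)"
    by (auto intro: min.coboundedI1)
qed

lemma min_min_le_min:
  fixes x\<^sub>1 x\<^sub>2 y\<^sub>1 y\<^sub>2 u\<^sub>1 u\<^sub>2 :: "'b::linorder"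
  assumes "min x\<^sub>1 y\<^sub>1 \<le> u\<^sub>1" and "min x\<^sub>2 y\<^sub>2 \<le> u\<^sub>2"
  shows "min (min x\<^sub>1 x\<^sub>2) (min y\<^sub>1 y\<^sub>2) \<le> min u\<^sub>1 u\<^sub>2"
proof -
  have "min (min x\<^sub>1 x\<^sub>2) (min y\<^sub>1 y\<^sub>2) = min (min x\<^sub>1 y\<^sub>1) (min x\<^sub>2 y\<^sub>2)"
    by (simp add: ac_simps)
  also have "\<dots> \<le> min u\<^sub>1 u\<^sub>2"
    using assms by (rule min.mono)
  finally show ?thesis .
qed

lemma strongest_fuzzy_relation_left_derivation_iff:
  "(\<forall>a b c. min (strongest_fuzzy_relation \<beta> (prod_op m (map_prod d d a) (prod_op m b c)))
                  (strongest_fuzzy_relation \<beta> (map_prod d d b))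
             \<le> strongest_fuzzy_relation \<beta> (map_prod d d (prod_op m a c))) \<longleftrightarrow>
   (\<forall>a b c. min (\<beta> (m (d a) (m b c))) (\<beta> (d b)) \<le> \<beta> (d (m a c)))"
  (is "?prod \<longleftrightarrow> ?base")
proof
  assume ?prod
  show ?base
  proof (intro allI)
    fix a b c
    from \<open>?prod\<close> have "min (strongest_fuzzy_relation \<beta> (prod_op m (map_prod d d (a, a)) (prod_op m (b, b) (c, c))))
                         (strongest_fuzzy_relation \<beta> (map_prod d d (b, b)))
                    \<le> strongest_fuzzy_relation \<beta> (map_prod d d (prod_op m (a, a) (c, c)))"
      by blast
    then show "min (\<beta> (m (d a) (m b c))) (\<beta> (d b)) \<le> \<beta> (d (m a c))"
      by (simp add: prod_op_def)
  qed
next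
  assume ?base
  show ?prod
  proof (intro allI)
    fix a b c :: "'a \<times> 'a"
    obtain a\<^sub>1 a\<^sub>2 b\<^sub>1 b\<^sub>2 c\<^sub>1 c\<^sub>2 where "a = (a\<^sub>1, a\<^sub>2)" "b = (b\<^sub>1, b\<^sub>2)" "c = (c\<^sub>1, c\<^sub>2)"
      by (cases a, cases b, cases c) auto
    with \<open>?base\<close> show "min (strongest_fuzzy_relation \<beta> (prod_op m (map_prod d d a) (prod_op m b c)))
                (strongest_fuzzy_relation \<beta> (map_prod d d b))
           \<le> strongest_fuzzy_relation \<beta> (map_prod d d (prod_op m a c))"
      by (simp add: prod_op_def min_min_le_min del: min.bounded_iff)
  qed
qed

lemma fuzzy_left_derivation_KU_ideal_prod_iff:
  assumes "fuzzy_set \<beta>"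
  shows "fuzzy_left_derivation_KU_ideal (prod_op m) (z, z) (map_prod d d) (strongest_fuzzy_relation \<beta>)
         \<longleftrightarrow> fuzzy_left_derivation_KU_ideal m z d \<beta>"
  unfolding fuzzy_left_derivation_KU_ideal_def
    strongest_fuzzy_relation_left_derivation_iff strongest_fuzzy_relation_le_diag_iff
  using assms fuzzy_set_strongest_fuzzy_relation by blast

theorem theorem5p14:
  fixes m :: "'a \<Rightarrow> 'a \<Rightarrow> 'a" and z :: 'a and d :: "'a \<Rightarrow> 'a" and \<beta> :: "'a \<Rightarrow> real"
  assumes "ku_algebra m z"
    and "fuzzy_set \<beta>"
  shows "fuzzy_left_derivation_KU_ideal m z d \<beta> \<longleftrightarrow>
         fuzzy_left_derivation_KU_ideal (prod_op m) (z, z) (\<lambda>(x, y). (d x, d y))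
           (\<lambda>(x, y). min (\<beta> x) (\<beta> y))"
proof -
  have "(\<lambda>(x, y). (d x, d y)) = map_prod d d"
    by (auto simp: map_prod_def)
  moreover have "(\<lambda>(x, y). min (\<beta> x) (\<beta> y)) = strongest_fuzzy_relation \<beta>"
    by (simp add: strongest_fuzzy_relation_def)
  ultimately show ?thesis
    using fuzzy_left_derivation_KU_ideal_prod_iff[OF assms(2)] by simp
qed

end
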